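(* Let $X$ be a Banach space, $B$ an admissible Banach sequence space over $\mathbb{Z}$, $(A_m)_{m\in\mathbb{Z}}$ a sequence of invertible bounded linear operators on $X$ with $\sup_m\lVert A_m\rVert<\infty$ admitting an exponential dichotomy, and $c>0$ a constant as described in the context. Let $f_n\colon X\to X$, $n\in\mathbb{Z}$, be differentiable maps with $\lVert d_xf_n\rVert\le c$ for all $x,n$, $\sup_n\sup_x\lVert f_n(x)\rVert<\infty$, and $\lVert d_xf_n-d_yf_n\rVert\le D\lVert x-y\rVert^r$ for some $D,r>0$ and all $x,y,n$. Put $F_n=A_n+f_n$. For $\delta>0$ and a $(\delta,B)$-pseudotrajectory $\mathbf y=(y_n)_{n\in\mathbb{Z}}$ for $x_{n+1}=F_n(x_n)$, let $\Gamma\colon X_B\to X_B$ be given by $(\Gamma\boldsymbol\xi)_n=A_{n-1}\xi_{n-1}+d_{y_{n-1}}f_{n-1}\,\xi_{n-1}$. Then $\mathrm{Id}-\Gamma$ is invertible on $X_B$, and there exists a constant $K>0$, independent of the pseudotrajectory $\mathbf y$ (and of $\delta$), such that $\lVert(\mathrm{Id}-\Gamma)^{-1}\rVert\le K$.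
   Context: A normed sequence space over $\mathbb{Z}$ is a linear subspace $B$ of the space of real sequences $\mathbf s=(s_n)_{n\in\mathbb{Z}}$ with a norm $\lVert\cdot\rVert_B$ such that if $\mathbf s'\in B$ and $|s_n|\le|s'_n|$ for all $n$ then $\mathbf s\in B$ and $\lVert\mathbf s\rVert_B\le\lVert\mathbf s'\rVert_B$; a Banach sequence space if complete. Admissible: each $\chi_{\{n\}}\in B$ with $\lVert\chi_{\{n\}}\rVert_B>0$, and $B$ is invariant under shifts $(s_n)\mapsto(s_{n+m})$ with equal norms; assume $\lVert\chi_{\{0\}}\rVert_B=1$. $X_B$ is the set of sequences $(x_n)\subset X$ with $(\lVert x_n\rVert)\in B$, normed by $\lVert\mathbf x\rVert_B=\lVert(\lVert x_n\rVert)_n\rVert_B$. Exponential dichotomy: with $\mathcal A(m,n)=A_{m-1}\cdots A_n$ ($m>n$), $\mathrm{Id}$ ($m=n$), $A_m^{-1}\cdots A_{n-1}^{-1}$ ($m<n$), there exist projections $P_m$ with $P_{m+1}A_m=A_mP_m$ and $C,\lambda>0$ with $\lVert\mathcal A(m,n)P_n\rVert\le Ce^{-\lambda(m-n)}$ ($m\ge n$) and $\lVert\mathcal A(m,n)(\mathrm{Id}-P_n)\rVert\le Ce^{-\lambda(n-m)}$ ($m\le n$). The constant $c>0$ is such that there is $K>0$ for which every sequence $(B_m)$ of bounded operators with $\sup_m\lVert A_m-B_m\rVert\le c$ admits an exponential dichotomy and the operator $(\mathbb B\mathbf x)_n=B_{n-1}x_{n-1}$ on $X_B$ has $\mathrm{Id}-\mathbb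 B$ invertible with $\lVert(\mathrm{Id}-\mathbb B)^{-1}\rVert\le K$. A $(\delta,B)$-pseudotrajectory for $x_{n+1}=F_n(x_n)$ is a sequence $(y_n)\subset X$ with $(y_{n+1}-F_n(y_n))_n\in X_B$ and $\lVert(y_{n+1}-F_n(y_n))_n\rVert_B\le\delta$. *)

theory Defs
  imports "HOL-Analysis.Analysis"
begin

definition normed_seq_space :: "(int \<Rightarrow> real) set \<Rightarrow> ((int \<Rightarrow> real) \<Rightarrow> real) \<Rightarrow> bool" where
  "normed_seq_space SB nB \<longleftrightarrow>
     (\<lambda>n. 0) \<in> SB \<and>
     (\<forall>s\<in>SB. \<forall>t\<in>SB. (\<lambda>n. s n + t n) \<in> SB) \<and>
     (\<forall>s\<in>SB. \<forall>a::real. (\<lambda>n. a * s n) \<in> SB) \<and>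
     (\<forall>s\<in>SB. nB s \<ge> 0 \<and> (nB s = 0 \<longleftrightarrow> s = (\<lambda>n. 0))) \<and>
     (\<forall>s\<in>SB. \<forall>a::real. nB (\<lambda>n. a * s n) = \<bar>a\<bar> * nB s) \<and>
     (\<forall>s\<in>SB. \<forall>t\<in>SB. nB (\<lambda>n. s n + t n) \<le> nB s + nB t) \<and>
     (\<forall>s t. t \<in> SB \<longrightarrow> (\<forall>n. \<bar>s n\<bar> \<le> \<bar>t n\<bar>) \<longrightarrow> s \<in> SB \<and> nB s \<le> nB t)"

definition banach_seq_space :: "(int \<Rightarrow> real) set \<Rightarrow> ((int \<Rightarrow> real) \<Rightarrow> real) \<Rightarrow> bool" where
  "banach_seq_space SB nB \<longleftrightarrow> normed_seq_space SB nB \<and>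
     (\<forall>u :: nat \<Rightarrow> int \<Rightarrow> real. (\<forall>k. u k \<in> SB) \<longrightarrow>
        (\<forall>e>0. \<exists>N. \<forall>k\<ge>N. \<forall>l\<ge>N. nB (\<lambda>n. u k n - u l n) < e) \<longrightarrow>
        (\<exists>s\<in>SB. (\<lambda>k. nB (\<lambda>n. u k n - s n)) \<longlonglongrightarrow> 0))"

definition admissible_seq_space :: "(int \<Rightarrow> real) set \<Rightarrow> ((int \<Rightarrow> real) \<Rightarrow> real) \<Rightarrow> bool" where
  "admissible_seq_space SB nB \<longleftrightarrow>
     (\<forall>n. indicator {n} \<in> SB \<and> nB (indicator {n}) > 0) \<and>
     (\<forall>s\<in>SB. \<forall>m. (\<lambda>n. s (n + m)) \<in> SB \<and> nB (\<lambda>n. s (n + m)) = nB s) \<and>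
     nB (indicator {0}) = 1"

definition in_XB :: "(int \<Rightarrow> real) set \<Rightarrow> (int \<Rightarrow> 'a::real_normed_vector) \<Rightarrow> bool" where
  "in_XB SB x \<longleftrightarrow> (\<lambda>n. norm (x n)) \<in> SB"

definition norm_XB :: "((int \<Rightarrow> real) \<Rightarrow> real) \<Rightarrow> (int \<Rightarrow> 'a::real_normed_vector) \<Rightarrow> real" where
  "norm_XB nB x = nB (\<lambda>n. norm (x n))"

definition invertible_bl :: "('a::real_normed_vector \<Rightarrow>\<^sub>L 'a) \<Rightarrow> bool" where
  "invertible_bl T \<longleftrightarrow> (\<exists>S. T o\<^sub>L S = id_blinfun \<and> S o\<^sub>L T = id_blinfun)"

definition blinv :: "('a::real_normed_vector \<Rightarrow>\<^sub>L 'a) \<Rightarrow> ('a \<Rightarrow>\<^sub>L 'a)" where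
  "blinv T = (SOME S. T o\<^sub>L S = id_blinfun \<and> S o\<^sub>L T = id_blinfun)"

text \<open>fwd A n k = A (n+k-1) \<circ> ... \<circ> A n\<close>
fun cocycle_fwd :: "(int \<Rightarrow> ('a::real_normed_vector \<Rightarrow>\<^sub>L 'a)) \<Rightarrow> int \<Rightarrow> nat \<Rightarrow> ('a \<Rightarrow>\<^sub>L 'a)" where
  "cocycle_fwd A n 0 = id_blinfun"
| "cocycle_fwd A n (Suc k) = A (n + int k) o\<^sub>L cocycle_fwd A n k"

text \<open>bwd A m k = A m^-1 \<circ> ... \<circ> A (m+k-1)^-1\<close>
fun cocycle_bwd :: "(int \<Rightarrow> ('a::real_normed_vector \<Rightarrow>\<^sub>L 'a)) \<Rightarrow> int \<Rightarrow> nat \<Rightarrow> ('a \<Rightarrow>\<^sub>L 'a)" where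
  "cocycle_bwd A m 0 = id_blinfun"
| "cocycle_bwd A m (Suc k) = cocycle_bwd A m k o\<^sub>L blinv (A (m + int k))"

definition cocycle :: "(int \<Rightarrow> ('a::real_normed_vector \<Rightarrow>\<^sub>L 'a)) \<Rightarrow> int \<Rightarrow> int \<Rightarrow> ('a \<Rightarrow>\<^sub>L 'a)" where
  "cocycle A m n = (if n \<le> m then cocycle_fwd A n (nat (m - n)) else cocycle_bwd A m (nat (n - m)))"

definition exp_dichotomy :: "(int \<Rightarrow> ('a::real_normed_vector \<Rightarrow>\<^sub>L 'a)) \<Rightarrow> bool" where
  "exp_dichotomy A \<longleftrightarrow> (\<forall>m. invertible_bl (A m)) \<and>
     (\<exists>P :: int \<Rightarrow> ('a \<Rightarrow>\<^sub>L 'a). \<exists>C lam :: real. C > 0 \<and> lam > 0 \<and>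
        (\<forall>m. P m o\<^sub>L P m = P m) \<and>
        (\<forall>m. P (m + 1) o\<^sub>L A m = A m o\<^sub>L P m) \<and>
        (\<forall>m n. n \<le> m \<longrightarrow> norm (cocycle A m n o\<^sub>L P n) \<le> C * exp (- lam * real_of_int (m - n))) \<and>
        (\<forall>m n. m \<le> n \<longrightarrow> norm (cocycle A m n o\<^sub>L (id_blinfun - P n)) \<le> C * exp (- lam * real_of_int (n - m))))"

definition id_minus_invertible_bound ::
  "(int \<Rightarrow> real) set \<Rightarrow> ((int \<Rightarrow> real) \<Rightarrow> real) \<Rightarrow> ((int \<Rightarrow> 'a::real_normed_vector) \<Rightarrow> (int \<Rightarrow> 'a)) \<Rightarrow> real \<Rightarrow> bool" where
  "id_minus_invertible_bound SB nB T K \<longleftrightarrow>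
     (\<forall>\<xi>. in_XB SB \<xi> \<longrightarrow> in_XB SB (T \<xi>)) \<and>
     (\<forall>z. in_XB SB z \<longrightarrow> (\<exists>!\<xi>. in_XB SB \<xi> \<and> (\<lambda>n. \<xi> n - T \<xi> n) = z)) \<and>
     (\<forall>\<xi>. in_XB SB \<xi> \<longrightarrow> norm_XB nB \<xi> \<le> K * norm_XB nB (\<lambda>n. \<xi> n - T \<xi> n))"

definition shift_op :: "(int \<Rightarrow> ('a::real_normed_vector \<Rightarrow>\<^sub>L 'a)) \<Rightarrow> (int \<Rightarrow> 'a) \<Rightarrow> (int \<Rightarrow> 'a)" where
  "shift_op Bs x = (\<lambda>n. Bs (n - 1) (x (n - 1)))"

definition pseudotrajectory ::
  "(int \<Rightarrow> real) set \<Rightarrow> ((int \<Rightarrow> real) \<Rightarrow> real) \<Rightarrow> (int \<Rightarrow> 'a::real_normed_vector \<Rightarrow> 'a) \<Rightarrow> real \<Rightarrow> (int \<Rightarrow> 'a) \<Rightarrow> bool" where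
  "pseudotrajectory SB nB F \<delta> y \<longleftrightarrow>
     in_XB SB (\<lambda>n. y (n + 1) - F n (y n)) \<and> norm_XB nB (\<lambda>n. y (n + 1) - F n (y n)) \<le> \<delta>"

end

theory Submission
  imports Defs
begin

(* The linearisation \<Gamma> along y is the operator shift_op Bs for Bs m = A m + d_{y m} f m,
   and norm (A m - Bs m) = norm (d_{y m} f m) \<le> c. So the uniform constant K attached to c
   bounds (Id - \<Gamma>)^-1 for every sequence y. *)

lemma shift_op_add:
  fixes A E :: "int \<Rightarrow> ('a::real_normed_vector \<Rightarrow>\<^sub>L 'a)"
  shows "shift_op (\<lambda>m. A m + E m) = (\<lambda>\<xi> n. A (n - 1) (\<xi> (n - 1)) + E (n - 1) (\<xi> (n - 1)))"
  by (simp add: shift_op_def blinfun.add_left fun_eq_iff)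

lemma id_minus_shift_op_bound_perturbation:
  fixes A E :: "int \<Rightarrow> ('a::real_normed_vector \<Rightarrow>\<^sub>L 'a)"
  assumes "\<And>Bs. (\<forall>m. norm (A m - Bs m) \<le> c) \<Longrightarrow> id_minus_invertible_bound SB nB (shift_op Bs) K"
    and "\<And>m. norm (E m) \<le> c"
  shows "id_minus_invertible_bound SB nB
           (\<lambda>\<xi> n. A (n - 1) (\<xi> (n - 1)) + E (n - 1) (\<xi> (n - 1))) K"
proof -
  have "\<forall>m. norm (A m - (A m + E m)) \<le> c"
    using assms(2) by simp
  then have "id_minus_invertible_bound SB nB (shift_op (\<lambda>m. A m + E m)) K"
    by (rule assms(1))
  then show ?thesis
    by (simp add: shift_op_add)
qed

theorem lemma3p3:
  fixes SB :: "(int \<Rightarrow> real) set" and nB :: "(int \<Rightarrow> real) \<Rightarrow> real"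
    and A :: "int \<Rightarrow> ('a::banach \<Rightarrow>\<^sub>L 'a)"
    and f :: "int \<Rightarrow> 'a \<Rightarrow> 'a" and df :: "int \<Rightarrow> 'a \<Rightarrow> ('a \<Rightarrow>\<^sub>L 'a)"
    and c :: real
  assumes B_banach: "banach_seq_space SB nB"
    and B_adm: "admissible_seq_space SB nB"
    and A_inv: "\<forall>m. invertible_bl (A m)"
    and A_bdd: "\<exists>M. \<forall>m. norm (A m) \<le> M"
    and A_dich: "exp_dichotomy A"
    and c_pos: "c > 0"
    and c_prop: "\<exists>K>0. \<forall>Bs :: int \<Rightarrow> ('a \<Rightarrow>\<^sub>L 'a). (\<forall>m. norm (A m - Bs m) \<le> c) \<longrightarrow>
                   exp_dichotomy Bs \<and> id_minus_invertible_bound SB nB (shift_op Bs) K"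
    and f_deriv: "\<forall>n x. (f n has_derivative blinfun_apply (df n x)) (at x)"
    and df_bdd: "\<forall>n x. norm (df n x) \<le> c"
    and f_bdd: "\<exists>M. \<forall>n x. norm (f n x) \<le> M"
    and df_hoelder: "\<exists>D r. D > 0 \<and> r > 0 \<and> (\<forall>n x y. norm (df n x - df n y) \<le> D * norm (x - y) powr r)"
  shows "\<exists>K>0. \<forall>\<delta> y. \<delta> > 0 \<longrightarrow>
           pseudotrajectory SB nB (\<lambda>n x. A n x + f n x) \<delta> y \<longrightarrow>
           id_minus_invertible_bound SB nB
             (\<lambda>\<xi> n. A (n - 1) (\<xi> (n - 1)) + df (n - 1) (y (n - 1)) (\<xi> (n - 1))) K"
proof -
  obtain K where "K > 0"
    and K_bound: "\<And>Bs. (\<forall>m. norm (A m - Bs m) \<le> c) \<Longrightarrow>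
                    id_minus_invertible_bound SB nB (shift_op Bs) K"
    using c_prop by blast
  have "id_minus_invertible_bound SB nB
          (\<lambda>\<xi> n. A (n - 1) (\<xi> (n - 1)) + df (n - 1) (y (n - 1)) (\<xi> (n - 1))) K" for y :: "int \<Rightarrow> 'a"
  proof (rule id_minus_shift_op_bound_perturbation[OF K_bound])
    show "norm (df m (y m)) \<le> c" for m
      using df_bdd by blast
  qed
  with \<open>K > 0\<close> show ?thesis
    by blast
qed

end
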